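(* Let $(S_b,I_b,R_b,D_b,S_r,I_r,R_r,D_r)$ be a solution of the modified Lanchester/SIR system defined for all $t\ge0$ with nonnegative components and nonnegative initial conditions, and suppose all model parameters are constant for $t\ge T_0$ for some $T_0$ (i.e. all switching events have occurred). Then for each compartment $C\in\{S_b,I_b,R_b,D_b,S_r,I_r,R_r,D_r\}$, $C'(t)\to 0$ as $t\to\infty$.
   Context: Barrier function: $f(x)=\exp(-0.0001/x)$ for $x>0$, $f(0)=0$; $f(x)x^a:=0$ at $x=0$. System (with $N_b=S_b+I_b+R_b$, $N_r=S_r+I_r+R_r$, $1/N$-terms set to $0$ when $N=0$), $A_r := \delta_r(f(S_r)S_r^p+f(R_r)R_r^p+\eta_r f(I_r)I_r^p)$: $S_b' = -\beta_b S_bI_b/N_b - \gamma_b S_b - A_r f(S_b)S_b^q - \alpha_r(S_r+R_r)S_b$, $I_b' = \beta_b S_bI_b/N_b - \tilde\gamma_b I_b(S_b+R_b)/N_b - A_r f(I_b)I_b^q + \alpha_r(S_r+R_r)S_b$, $R_b' = \gamma_b S_b + \tilde\gamma_b I_b(S_b+R_b)/N_b - A_r f(R_b)R_b^q$, $D_b' = A_r(f(S_b)S_b^q+f(I_b)I_b^q+f(R_b)R_b^q)$, red equations by interchanging $b$ and $r$. Parameters $\alpha,\beta,\tilde\gamma,\delta\ge0$, $\gamma,\eta\in[0,1]$, $p,q\ge0$; the parameters $\alpha,\gamma,\tilde\gamma,\delta$ may be piecewise constant in time (switched on/off at finitely many event times). *)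

theory Defs
  imports "HOL-Analysis.Analysis"
begin

definition barrier :: "real \<Rightarrow> real" where
  "barrier x = (if x > 0 then exp (- 0.0001 / x) else 0)"

definition fpow :: "real \<Rightarrow> real \<Rightarrow> real" where
  "fpow a x = (if x > 0 then barrier x * x powr a else 0)"

definition sdiv :: "real \<Rightarrow> real \<Rightarrow> real" where
  "sdiv x N = (if N = 0 then 0 else x / N)"

definition attack :: "real \<Rightarrow> real \<Rightarrow> real \<Rightarrow> real \<Rightarrow> real \<Rightarrow> real \<Rightarrow> real" where
  "attack \<delta> \<eta> p S I R = \<delta> * (fpow p S + fpow p R + \<eta> * fpow p I)"

text \<open>Right-hand sides for one army (own compartments S I R, enemy's S' R',
  enemy's alpha and enemy's attack strength Aen).\<close>
definition rhsS :: "real \<Rightarrow> real \<Rightarrow> real \<Rightarrow> real \<Rightarrow> real \<Rightarrow> real \<Rightarrow> real \<Rightarrow> real \<Rightarrow> real \<Rightarrow> real \<Rightarrow> real" where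
  "rhsS \<beta> \<gamma> \<alpha>en Aen q S I R Sen Ren =
     - \<beta> * sdiv (S * I) (S + I + R) - \<gamma> * S - Aen * fpow q S - \<alpha>en * (Sen + Ren) * S"

definition rhsI :: "real \<Rightarrow> real \<Rightarrow> real \<Rightarrow> real \<Rightarrow> real \<Rightarrow> real \<Rightarrow> real \<Rightarrow> real \<Rightarrow> real \<Rightarrow> real \<Rightarrow> real" where
  "rhsI \<beta> \<gamma>t \<alpha>en Aen q S I R Sen Ren =
     \<beta> * sdiv (S * I) (S + I + R) - \<gamma>t * sdiv (I * (S + R)) (S + I + R)
     - Aen * fpow q I + \<alpha>en * (Sen + Ren) * S"

definition rhsR :: "real \<Rightarrow> real \<Rightarrow> real \<Rightarrow> real \<Rightarrow> real \<Rightarrow> real \<Rightarrow> real \<Rightarrow> real" where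
  "rhsR \<gamma> \<gamma>t Aen q S I R =
     \<gamma> * S + \<gamma>t * sdiv (I * (S + R)) (S + I + R) - Aen * fpow q R"

definition rhsD :: "real \<Rightarrow> real \<Rightarrow> real \<Rightarrow> real \<Rightarrow> real \<Rightarrow> real" where
  "rhsD Aen q S I R = Aen * (fpow q S + fpow q I + fpow q R)"

definition piecewise_const :: "real set \<Rightarrow> (real \<Rightarrow> real) \<Rightarrow> bool" where
  "piecewise_const E g \<longleftrightarrow> finite E \<and>
     (\<forall>t. t \<ge> 0 \<and> t \<notin> E \<longrightarrow> (\<exists>e>0. \<forall>s. s \<ge> 0 \<and> \<bar>s - t\<bar> < e \<longrightarrow> g s = g t))"

end

theory Submission
  imports Defs "HOL-Real_Asymp.Real_Asymp"
begin

text \<open>Once all switching events are over, the system is autonomous and each army obeys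
  monotonicity laws: \<open>S\<close> and \<open>S + I\<close> are nonincreasing, \<open>D\<close> is nondecreasing and the total
  \<open>S + I + R + D\<close> is conserved. Together with nonnegativity this makes all eight compartments
  converge. Every right-hand side is a function of the compartments that is continuous on the
  nonnegative orthant (the barrier makes \<open>f(x) x^q\<close> continuous at \<open>0\<close>, and the incidence terms
  are dominated by a factor of their numerator), so every derivative converges as well; and a
  convergent function whose derivative converges has derivative tending to \<open>0\<close>.\<close>

lemma antimono_bounded_below_convergent:
  fixes f :: "real \<Rightarrow> real"
  assumes antimono: "\<And>s t. a \<le> s \<Longrightarrow> s \<le> t \<Longrightarrow> f t \<le> f s"
    and bounded: "\<And>t. a \<le> t \<Longrightarrow> B \<le> f t"
  shows "\<exists>L. (f \<longlongrightarrow> L) at_top"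
proof -
  define L where "L = Inf (f ` {a..})"
  have bdd: "bdd_below (f ` {a..})"
    by (rule bdd_belowI2[of _ B]) (use bounded in auto)
  have "(f \<longlongrightarrow> L) at_top"
  proof (rule decreasing_tendsto)
    show "\<forall>\<^sub>F t in at_top. L \<le> f t"
      unfolding eventually_at_top_linorder L_def
      by (rule exI[of _ a]) (auto intro!: cInf_lower bdd)
  next
    fix x assume "L < x"
    then obtain t where t: "a \<le> t" "f t < x"
      unfolding L_def using cInf_lessD[of "f ` {a..}" x] by auto
    show "\<forall>\<^sub>F s in at_top. f s < x"
      unfolding eventually_at_top_linorder
      by (rule exI[of _ t]) (use t antimono in force)
  qed
  then show ?thesis by blast
qed

lemma DERIV_nonpos_imp_nonincreasing_from:
  fixes f :: "real \<Rightarrow> real"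
  assumes "\<And>t. a \<le> t \<Longrightarrow> (f has_real_derivative f' t) (at t)"
    and "\<And>t. a \<le> t \<Longrightarrow> f' t \<le> 0"
    and "a \<le> s" "s \<le> t"
  shows "f t \<le> f s"
  by (rule DERIV_nonpos_imp_nonincreasing[of s t f]) (use assms order_trans in blast)+

lemma tendsto_deriv_zero_if_convergent:
  fixes f f' :: "real \<Rightarrow> real"
  assumes f: "(f \<longlongrightarrow> c) at_top"
    and der: "\<And>t. a \<le> t \<Longrightarrow> (f has_real_derivative f' t) (at t)"
    and f': "(f' \<longlongrightarrow> L) at_top"
  shows "(deriv f \<longlongrightarrow> 0) at_top"
proof -
  have "L = 0"
  proof (rule ccontr)
    assume "L \<noteq> 0"
    then have e: "\<bar>L\<bar> / 3 > 0" by simp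
    have "\<forall>\<^sub>F t in at_top. \<bar>f t - c\<bar> < \<bar>L\<bar> / 3" "\<forall>\<^sub>F t in at_top. \<bar>f' t - L\<bar> < \<bar>L\<bar> / 3"
      using f f' e unfolding tendsto_iff dist_real_def by blast+
    then have "\<forall>\<^sub>F t in at_top. \<bar>f t - c\<bar> < \<bar>L\<bar> / 3 \<and> \<bar>f' t - L\<bar> < \<bar>L\<bar> / 3 \<and> a \<le> t"
      by (intro eventually_conj eventually_ge_at_top)
    then obtain B where B: "\<And>t. B \<le> t \<Longrightarrow> \<bar>f t - c\<bar> < \<bar>L\<bar> / 3 \<and> \<bar>f' t - L\<bar> < \<bar>L\<bar> / 3 \<and> a \<le> t"
      unfolding eventually_at_top_linorder by blast
    obtain z where z: "B < z" "f (B + 1) - f B = f' z"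
      using MVT2[of B "B + 1" f f'] B der by force
    have "\<bar>f (B + 1) - f B\<bar> < 2 * (\<bar>L\<bar> / 3)"
      using B[of B] B[of "B + 1"] by arith
    moreover have "\<bar>f' z - L\<bar> < \<bar>L\<bar> / 3"
      using B z(1) by auto
    ultimately show False
      using z(2) by linarith
  qed
  moreover have "\<forall>\<^sub>F t in at_top. f' t = deriv f t"
    using eventually_ge_at_top[of a] by eventually_elim (simp add: DERIV_imp_deriv[OF der])
  ultimately show ?thesis
    using f' tendsto_cong by force
qed

lemma fpow_nonneg: "0 \<le> fpow q x"
  by (simp add: fpow_def barrier_def)

lemma continuous_on_fpow:
  assumes q: "0 \<le> q"
  shows "continuous_on {0..} (fpow q)"
proof -
  have pos: "continuous_on {0<..} (fpow q)"
  proof (rule continuous_on_cong[THEN iffD1, OF refl _ _])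
    show "continuous_on {0<..} (\<lambda>x. exp (- 0.0001 / x) * x powr q)"
      by (intro continuous_intros) auto
    show "\<And>x. x \<in> {0<..} \<Longrightarrow> exp (- 0.0001 / x) * x powr q = fpow q x"
      by (simp add: fpow_def barrier_def)
  qed
  have "(fpow q \<longlongrightarrow> 0) (at_right 0)"
  proof (rule Lim_null_comparison)
    show "((\<lambda>x::real. exp (- 0.0001 / x)) \<longlongrightarrow> 0) (at_right 0)"
      by real_asymp
    have "norm (fpow q x) \<le> exp (- 0.0001 / x)" if "0 < x" "x < 1" for x
    proof -
      have "x powr q \<le> 1" using that q by (intro powr_le1) auto
      then show ?thesis
        using that by (simp add: fpow_def barrier_def mult_left_le)
    qed
    then show "\<forall>\<^sub>F x in at_right 0. norm (fpow q x) \<le> exp (- 0.0001 / x)"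
      unfolding eventually_at_right_field by (intro exI[of _ 1]) auto
  qed
  then have "continuous (at 0 within {0..}) (fpow q)"
    unfolding continuous_within at_within_Ici_at_right by (simp add: fpow_def)
  moreover have "continuous (at x within {0..}) (fpow q)" if "0 < x" for x
    using pos that by (simp add: continuous_on_eq_continuous_at continuous_at_imp_continuous_within)
  ultimately show ?thesis
    unfolding continuous_on_eq_continuous_within by (metis atLeast_iff order_le_less)
qed

lemma tendsto_fpow:
  assumes "(g \<longlongrightarrow> l) F" "\<forall>\<^sub>F t in F. 0 \<le> g t" "\<not> trivial_limit F" "0 \<le> q"
  shows "((\<lambda>t. fpow q (g t)) \<longlongrightarrow> fpow q l) F"
  using assms tendsto_lowerbound[OF assms(1,2,3)]
  by (intro continuous_on_tendsto_compose[OF continuous_on_fpow]) auto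

lemma sdiv_nonneg: "0 \<le> x \<Longrightarrow> 0 \<le> N \<Longrightarrow> 0 \<le> sdiv x N"
  by (simp add: sdiv_def)

lemma abs_sdiv_mult_le:
  assumes "0 \<le> x" "0 \<le> y" "y \<le> N"
  shows "\<bar>sdiv (x * y) N\<bar> \<le> x"
proof (cases "N = 0")
  case False
  then have "x * y / N \<le> x"
    using assms by (simp add: divide_le_eq mult_left_mono)
  then show ?thesis
    using False assms by (simp add: sdiv_def)
qed (use assms in \<open>simp add: sdiv_def\<close>)

text \<open>Where \<open>N\<close> vanishes, continuity of the incidence term \<open>x y / N\<close> comes from the bound
  \<open>x y / N \<le> x\<close>.\<close>

lemma tendsto_sdiv_mult:
  fixes x y n :: "'a \<Rightarrow> real"
  assumes x: "(x \<longlongrightarrow> X) F" and y: "(y \<longlongrightarrow> Y) F" and n: "(n \<longlongrightarrow> N) F"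
    and F: "\<not> trivial_limit F"
    and ev: "\<forall>\<^sub>F t in F. 0 \<le> x t \<and> 0 \<le> y t \<and> x t \<le> n t \<and> y t \<le> n t"
  shows "((\<lambda>t. sdiv (x t * y t) (n t)) \<longlongrightarrow> sdiv (X * Y) N) F"
proof (cases "N = 0")
  case True
  have "X \<le> N"
    using ev by (intro tendsto_le[OF F n x]) (auto elim: eventually_mono)
  moreover have "0 \<le> X"
    using ev by (intro tendsto_lowerbound[OF x _ F]) (auto elim: eventually_mono)
  ultimately have "(x \<longlongrightarrow> 0) F"
    using x True by simp
  moreover have "\<forall>\<^sub>F t in F. norm (sdiv (x t * y t) (n t)) \<le> x t"
    using ev by eventually_elim (simp add: abs_sdiv_mult_le)
  ultimately have "((\<lambda>t. sdiv (x t * y t) (n t)) \<longlongrightarrow> 0) F"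
    by (simp add: Lim_null_comparison)
  then show ?thesis
    using True by (simp add: sdiv_def)
next
  case False
  have "\<forall>\<^sub>F t in F. x t * y t / n t = sdiv (x t * y t) (n t)"
    using tendsto_imp_eventually_ne[OF n False] by eventually_elim (simp add: sdiv_def)
  moreover have "((\<lambda>t. x t * y t / n t) \<longlongrightarrow> X * Y / N) F"
    using x y n False by (intro tendsto_intros)
  ultimately show ?thesis
    using False tendsto_cong by (force simp: sdiv_def)
qed

lemma attack_nonneg: "0 \<le> \<delta> \<Longrightarrow> 0 \<le> \<eta> \<Longrightarrow> 0 \<le> attack \<delta> \<eta> p S I R"
  unfolding attack_def by (simp add: fpow_nonneg)

lemma tendsto_attack:
  assumes "(S \<longlongrightarrow> LS) F" "(I \<longlongrightarrow> LI) F" "(R \<longlongrightarrow> LR) F" "\<not> trivial_limit F" "0 \<le> p"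
    and "\<forall>\<^sub>F t in F. 0 \<le> S t \<and> 0 \<le> I t \<and> 0 \<le> R t"
  shows "((\<lambda>t. attack \<delta> \<eta> p (S t) (I t) (R t)) \<longlongrightarrow> attack \<delta> \<eta> p LS LI LR) F"
  unfolding attack_def using assms(6)
  by (intro tendsto_intros tendsto_fpow assms(1-5)) (auto elim: eventually_mono)

lemma rhs_sum_eq_zero:
  "rhsS \<beta> \<gamma> \<alpha> A q S I R Sen Ren + rhsI \<beta> \<gamma>t \<alpha> A q S I R Sen Ren + rhsR \<gamma> \<gamma>t A q S I R
     + rhsD A q S I R = 0"
  unfolding rhsS_def rhsI_def rhsR_def rhsD_def by (simp add: algebra_simps)

text \<open>One army from time \<open>a\<close> on, with its parameters frozen: \<open>A\<close> is the enemy's attack strength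
  and \<open>Sen\<close>, \<open>Ren\<close> are the enemy's susceptible and recovered compartments.\<close>

locale army_dynamics =
  fixes \<beta> \<gamma> \<gamma>t \<alpha> q a :: real
    and S I R D A Sen Ren :: "real \<Rightarrow> real"
  assumes params_nonneg: "0 \<le> \<beta>" "0 \<le> \<gamma>" "0 \<le> \<gamma>t" "0 \<le> \<alpha>" "0 \<le> q"
    and nonneg: "\<And>t. a \<le> t \<Longrightarrow>
      0 \<le> S t \<and> 0 \<le> I t \<and> 0 \<le> R t \<and> 0 \<le> D t \<and> 0 \<le> A t \<and> 0 \<le> Sen t \<and> 0 \<le> Ren t"
    and dS: "\<And>t. a \<le> t \<Longrightarrow>
      (S has_real_derivative rhsS \<beta> \<gamma> \<alpha> (A t) q (S t) (I t) (R t) (Sen t) (Ren t)) (at t)"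
    and dI: "\<And>t. a \<le> t \<Longrightarrow>
      (I has_real_derivative rhsI \<beta> \<gamma>t \<alpha> (A t) q (S t) (I t) (R t) (Sen t) (Ren t)) (at t)"
    and dR: "\<And>t. a \<le> t \<Longrightarrow> (R has_real_derivative rhsR \<gamma> \<gamma>t (A t) q (S t) (I t) (R t)) (at t)"
    and dD: "\<And>t. a \<le> t \<Longrightarrow> (D has_real_derivative rhsD (A t) q (S t) (I t) (R t)) (at t)"
begin

lemma rhs_terms_nonneg:
  assumes "a \<le> t"
  shows "0 \<le> \<beta> * sdiv (S t * I t) (S t + I t + R t)"
    and "0 \<le> \<gamma>t * sdiv (I t * (S t + R t)) (S t + I t + R t)"
    and "0 \<le> \<gamma> * S t" "0 \<le> \<alpha> * (Sen t + Ren t) * S t"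
    and "0 \<le> A t * fpow q (S t)" "0 \<le> A t * fpow q (I t)" "0 \<le> A t * fpow q (R t)"
  using nonneg[OF assms] params_nonneg by (simp_all add: sdiv_nonneg fpow_nonneg)

lemma S_nonincreasing:
  assumes "a \<le> s" "s \<le> t"
  shows "S t \<le> S s"
proof (rule DERIV_nonpos_imp_nonincreasing_from[OF dS _ assms])
  fix t assume "a \<le> t"
  then show "rhsS \<beta> \<gamma> \<alpha> (A t) q (S t) (I t) (R t) (Sen t) (Ren t) \<le> 0"
    using rhs_terms_nonneg[of t] unfolding rhsS_def by linarith
qed

lemma SI_nonincreasing:
  assumes "a \<le> s" "s \<le> t"
  shows "S t + I t \<le> S s + I s"
proof (rule DERIV_nonpos_imp_nonincreasing_from[where f = "\<lambda>t. S t + I t", OF _ _ assms])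
  fix t assume t: "a \<le> t"
  show "((\<lambda>t. S t + I t) has_real_derivative
      rhsS \<beta> \<gamma> \<alpha> (A t) q (S t) (I t) (R t) (Sen t) (Ren t)
      + rhsI \<beta> \<gamma>t \<alpha> (A t) q (S t) (I t) (R t) (Sen t) (Ren t)) (at t)"
    using t by (intro DERIV_add dS dI)
  show "rhsS \<beta> \<gamma> \<alpha> (A t) q (S t) (I t) (R t) (Sen t) (Ren t)
      + rhsI \<beta> \<gamma>t \<alpha> (A t) q (S t) (I t) (R t) (Sen t) (Ren t) \<le> 0"
    using rhs_terms_nonneg[OF t] unfolding rhsS_def rhsI_def by linarith
qed

lemma D_nondecreasing:
  assumes "a \<le> s" "s \<le> t"
  shows "D s \<le> D t"
proof -
  have "- D t \<le> - D s"
  proof (rule DERIV_nonpos_imp_nonincreasing_from[where f = "\<lambda>t. - D t", OF _ _ assms])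
    fix t assume t: "a \<le> t"
    show "((\<lambda>t. - D t) has_real_derivative - rhsD (A t) q (S t) (I t) (R t)) (at t)"
      using t by (intro DERIV_minus dD)
    show "- rhsD (A t) q (S t) (I t) (R t) \<le> 0"
      using rhs_terms_nonneg[OF t] unfolding rhsD_def by (simp add: distrib_left)
  qed
  then show ?thesis by simp
qed

lemma total_constant:
  assumes "a \<le> t"
  shows "S t + I t + R t + D t = S a + I a + R a + D a"
proof -
  have total_deriv: "((\<lambda>t. S t + I t + R t + D t) has_real_derivative 0) (at t)" if "a \<le> t" for t
    using DERIV_add[OF DERIV_add[OF DERIV_add[OF dS[OF that] dI[OF that]] dR[OF that]] dD[OF that]]
    by (simp add: rhs_sum_eq_zero)
  then have minus_total_deriv: "((\<lambda>t. - (S t + I t + R t + D t)) has_real_derivative 0) (at t)"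
    if "a \<le> t" for t
    using DERIV_minus that by fastforce
  from DERIV_nonpos_imp_nonincreasing_from[where f' = "\<lambda>_. 0", OF total_deriv _ order_refl assms]
    DERIV_nonpos_imp_nonincreasing_from[where f' = "\<lambda>_. 0", OF minus_total_deriv _ order_refl assms]
  show ?thesis by simp
qed

lemma compartments_convergent:
  obtains LS LI LR LD where "(S \<longlongrightarrow> LS) at_top" "(I \<longlongrightarrow> LI) at_top"
    "(R \<longlongrightarrow> LR) at_top" "(D \<longlongrightarrow> LD) at_top"
proof -
  obtain LS where LS: "(S \<longlongrightarrow> LS) at_top"
    using antimono_bounded_below_convergent[of a S 0] S_nonincreasing nonneg by blast
  have "0 \<le> S t + I t" if "a \<le> t" for t
    using nonneg[OF that] by simp
  then obtain LSI where LSI: "((\<lambda>t. S t + I t) \<longlongrightarrow> LSI) at_top"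
    using antimono_bounded_below_convergent[of a "\<lambda>t. S t + I t" 0] SI_nonincreasing by blast
  define N where "N = S a + I a + R a + D a"
  have "- N \<le> - D t" if "a \<le> t" for t
    using total_constant[OF that] nonneg[OF that] unfolding N_def by linarith
  then obtain LD' where "((\<lambda>t. - D t) \<longlongrightarrow> LD') at_top"
    using antimono_bounded_below_convergent[of a "\<lambda>t. - D t" "- N"] D_nondecreasing by auto
  then have LD: "(D \<longlongrightarrow> - LD') at_top"
    using tendsto_minus by fastforce
  have "\<forall>\<^sub>F t in at_top. S t + I t - S t = I t"
    by simp
  then have LI: "(I \<longlongrightarrow> LSI - LS) at_top"
    using tendsto_diff[OF LSI LS] tendsto_cong by force
  have "\<forall>\<^sub>F t in at_top. N - (S t + I t) - D t = R t"
    using eventually_ge_at_top[of a] by eventually_elim (simp add: N_def total_constant[symmetric])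
  then have LR: "(R \<longlongrightarrow> N - LSI - - LD') at_top"
    using tendsto_diff[OF tendsto_diff[OF tendsto_const LSI] LD] tendsto_cong by force
  from LS LI LR LD show ?thesis by (rule that)
qed

lemma derivs_tendsto_zero:
  assumes "(A \<longlongrightarrow> LA) at_top" "(Sen \<longlongrightarrow> LSen) at_top" "(Ren \<longlongrightarrow> LRen) at_top"
  shows "(deriv S \<longlongrightarrow> 0) at_top" "(deriv I \<longlongrightarrow> 0) at_top"
    "(deriv R \<longlongrightarrow> 0) at_top" "(deriv D \<longlongrightarrow> 0) at_top"
proof -
  obtain LS LI LR LD where L: "(S \<longlongrightarrow> LS) at_top" "(I \<longlongrightarrow> LI) at_top"
    "(R \<longlongrightarrow> LR) at_top" "(D \<longlongrightarrow> LD) at_top"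
    by (rule compartments_convergent)
  have ev: "\<forall>\<^sub>F t in at_top. 0 \<le> S t \<and> 0 \<le> I t \<and> 0 \<le> R t"
    using eventually_ge_at_top[of a] by eventually_elim (use nonneg in blast)
  note lims = assms L trivial_limit_at_top_linorder params_nonneg(5)
    tendsto_fpow[OF L(1)] tendsto_fpow[OF L(2)] tendsto_fpow[OF L(3)]
    tendsto_sdiv_mult[OF L(1) L(2)] tendsto_sdiv_mult[OF L(2) tendsto_add[OF L(1) L(3)]]
  have side: "\<forall>\<^sub>F t in at_top. 0 \<le> S t" "\<forall>\<^sub>F t in at_top. 0 \<le> I t" "\<forall>\<^sub>F t in at_top. 0 \<le> R t"
    "\<forall>\<^sub>F t in at_top. 0 \<le> S t \<and> 0 \<le> I t \<and> S t \<le> S t + I t + R t \<and> I t \<le> S t + I t + R t"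
    "\<forall>\<^sub>F t in at_top. 0 \<le> I t \<and> 0 \<le> S t + R t \<and> I t \<le> S t + I t + R t \<and> S t + R t \<le> S t + I t + R t"
    using ev by (auto elim: eventually_mono)
  have "((\<lambda>t. rhsS \<beta> \<gamma> \<alpha> (A t) q (S t) (I t) (R t) (Sen t) (Ren t))
      \<longlongrightarrow> rhsS \<beta> \<gamma> \<alpha> LA q LS LI LR LSen LRen) at_top"
    unfolding rhsS_def by (intro tendsto_intros lims side)
  then show "(deriv S \<longlongrightarrow> 0) at_top"
    using L(1) dS by (intro tendsto_deriv_zero_if_convergent)
  have "((\<lambda>t. rhsI \<beta> \<gamma>t \<alpha> (A t) q (S t) (I t) (R t) (Sen t) (Ren t))
      \<longlongrightarrow> rhsI \<beta> \<gamma>t \<alpha> LA q LS LI LR LSen LRen) at_top"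
    unfolding rhsI_def by (intro tendsto_intros lims side)
  then show "(deriv I \<longlongrightarrow> 0) at_top"
    using L(2) dI by (intro tendsto_deriv_zero_if_convergent)
  have "((\<lambda>t. rhsR \<gamma> \<gamma>t (A t) q (S t) (I t) (R t)) \<longlongrightarrow> rhsR \<gamma> \<gamma>t LA q LS LI LR) at_top"
    unfolding rhsR_def by (intro tendsto_intros lims side)
  then show "(deriv R \<longlongrightarrow> 0) at_top"
    using L(3) dR by (intro tendsto_deriv_zero_if_convergent)
  have "((\<lambda>t. rhsD (A t) q (S t) (I t) (R t)) \<longlongrightarrow> rhsD LA q LS LI LR) at_top"
    unfolding rhsD_def by (intro tendsto_intros lims side)
  then show "(deriv D \<longlongrightarrow> 0) at_top"
    using L(4) dD by (intro tendsto_deriv_zero_if_convergent)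
qed

end

theorem proposition3:
  fixes Sb Ib Rb Db Sr Ir Rr Dr :: "real \<Rightarrow> real"
    and \<alpha>b \<alpha>r \<gamma>b \<gamma>r \<gamma>tb \<gamma>tr \<delta>b \<delta>r :: "real \<Rightarrow> real"
    and \<beta>b \<beta>r \<eta>b \<eta>r p q T0 :: real
    and E :: "real set"
  assumes params_const: "\<beta>b \<ge> 0" "\<beta>r \<ge> 0" "\<eta>b \<in> {0..1}" "\<eta>r \<in> {0..1}" "p \<ge> 0" "q \<ge> 0"
    and params_var: "\<And>t. t \<ge> 0 \<Longrightarrow> \<alpha>b t \<ge> 0 \<and> \<alpha>r t \<ge> 0 \<and> \<gamma>b t \<in> {0..1} \<and> \<gamma>r t \<in> {0..1}
                        \<and> \<gamma>tb t \<ge> 0 \<and> \<gamma>tr t \<ge> 0 \<and> \<delta>b t \<ge> 0 \<and> \<delta>r t \<ge> 0"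
    and piecewise: "\<forall>g\<in>{\<alpha>b, \<alpha>r, \<gamma>b, \<gamma>r, \<gamma>tb, \<gamma>tr, \<delta>b, \<delta>r}. piecewise_const E g"
    and events_before: "\<forall>e\<in>E. e \<le> T0"
    and const_after: "\<forall>g\<in>{\<alpha>b, \<alpha>r, \<gamma>b, \<gamma>r, \<gamma>tb, \<gamma>tr, \<delta>b, \<delta>r}. \<forall>t\<ge>T0. g t = g T0"
    and cont: "\<forall>C\<in>{Sb, Ib, Rb, Db, Sr, Ir, Rr, Dr}. continuous_on {0..} C"
    and nonneg: "\<And>t. t \<ge> 0 \<Longrightarrow> Sb t \<ge> 0 \<and> Ib t \<ge> 0 \<and> Rb t \<ge> 0 \<and> Db t \<ge> 0
                      \<and> Sr t \<ge> 0 \<and> Ir t \<ge> 0 \<and> Rr t \<ge> 0 \<and> Dr t \<ge> 0"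
    and ode: "\<And>t. t \<ge> 0 \<Longrightarrow> t \<notin> E \<Longrightarrow>
      (let Ab = attack (\<delta>b t) \<eta>b p (Sb t) (Ib t) (Rb t);
           Ar = attack (\<delta>r t) \<eta>r p (Sr t) (Ir t) (Rr t) in
       (Sb has_real_derivative rhsS \<beta>b (\<gamma>b t) (\<alpha>r t) Ar q (Sb t) (Ib t) (Rb t) (Sr t) (Rr t)) (at t within {0..})
     \<and> (Ib has_real_derivative rhsI \<beta>b (\<gamma>tb t) (\<alpha>r t) Ar q (Sb t) (Ib t) (Rb t) (Sr t) (Rr t)) (at t within {0..})
     \<and> (Rb has_real_derivative rhsR (\<gamma>b t) (\<gamma>tb t) Ar q (Sb t) (Ib t) (Rb t)) (at t within {0..})
     \<and> (Db has_real_derivative rhsD Ar q (Sb t) (Ib t) (Rb t)) (at t within {0..})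
     \<and> (Sr has_real_derivative rhsS \<beta>r (\<gamma>r t) (\<alpha>b t) Ab q (Sr t) (Ir t) (Rr t) (Sb t) (Rb t)) (at t within {0..})
     \<and> (Ir has_real_derivative rhsI \<beta>r (\<gamma>tr t) (\<alpha>b t) Ab q (Sr t) (Ir t) (Rr t) (Sb t) (Rb t)) (at t within {0..})
     \<and> (Rr has_real_derivative rhsR (\<gamma>r t) (\<gamma>tr t) Ab q (Sr t) (Ir t) (Rr t)) (at t within {0..})
     \<and> (Dr has_real_derivative rhsD Ab q (Sr t) (Ir t) (Rr t)) (at t within {0..}))"
  shows "\<forall>C\<in>{Sb, Ib, Rb, Db, Sr, Ir, Rr, Dr}. ((\<lambda>t. deriv C t) \<longlongrightarrow> 0) at_top"
proof -
  define a where "a = max T0 0 + 1"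
  have a: "0 < a" "T0 < a"
    unfolding a_def by auto
  have const: "g t = g a" if "g \<in> {\<alpha>b, \<alpha>r, \<gamma>b, \<gamma>r, \<gamma>tb, \<gamma>tr, \<delta>b, \<delta>r}" "a \<le> t" for g t
    using bspec[OF const_after that(1)] that(2) a by (metis less_imp_le order_trans)
  have params_after: "\<alpha>b t = \<alpha>b a" "\<alpha>r t = \<alpha>r a" "\<gamma>b t = \<gamma>b a" "\<gamma>r t = \<gamma>r a"
    "\<gamma>tb t = \<gamma>tb a" "\<gamma>tr t = \<gamma>tr a" "\<delta>b t = \<delta>b a" "\<delta>r t = \<delta>r a" if "a \<le> t" for t
    by (rule const[OF _ that], simp)+
  have after_events: "0 \<le> t" "t \<notin> E" "at t within {0..} = at t" if "a \<le> t" for t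
  proof -
    show "0 \<le> t"
      using that a by simp
    show "at t within {0..} = at t"
      by (rule at_within_interior) (use that a in simp)
    show "t \<notin> E"
      using that a events_before by fastforce
  qed
  have ode_after: "let Ab = attack (\<delta>b a) \<eta>b p (Sb t) (Ib t) (Rb t);
         Ar = attack (\<delta>r a) \<eta>r p (Sr t) (Ir t) (Rr t) in
       (Sb has_real_derivative rhsS \<beta>b (\<gamma>b a) (\<alpha>r a) Ar q (Sb t) (Ib t) (Rb t) (Sr t) (Rr t)) (at t)
     \<and> (Ib has_real_derivative rhsI \<beta>b (\<gamma>tb a) (\<alpha>r a) Ar q (Sb t) (Ib t) (Rb t) (Sr t) (Rr t)) (at t)
     \<and> (Rb has_real_derivative rhsR (\<gamma>b a) (\<gamma>tb a) Ar q (Sb t) (Ib t) (Rb t)) (at t)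
     \<and> (Db has_real_derivative rhsD Ar q (Sb t) (Ib t) (Rb t)) (at t)
     \<and> (Sr has_real_derivative rhsS \<beta>r (\<gamma>r a) (\<alpha>b a) Ab q (Sr t) (Ir t) (Rr t) (Sb t) (Rb t)) (at t)
     \<and> (Ir has_real_derivative rhsI \<beta>r (\<gamma>tr a) (\<alpha>b a) Ab q (Sr t) (Ir t) (Rr t) (Sb t) (Rb t)) (at t)
     \<and> (Rr has_real_derivative rhsR (\<gamma>r a) (\<gamma>tr a) Ab q (Sr t) (Ir t) (Rr t)) (at t)
     \<and> (Dr has_real_derivative rhsD Ab q (Sr t) (Ir t) (Rr t)) (at t)" if "a \<le> t" for t
    using ode[OF after_events(1,2)[OF that]]
    unfolding after_events(3)[OF that] params_after[OF that] .
  have params_a: "0 \<le> \<alpha>b a" "0 \<le> \<alpha>r a" "0 \<le> \<gamma>b a" "0 \<le> \<gamma>r a" "0 \<le> \<gamma>tb a" "0 \<le> \<gamma>tr a"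
    "0 \<le> \<delta>b a" "0 \<le> \<delta>r a" "0 \<le> \<eta>b" "0 \<le> \<eta>r"
    using params_var[of a] params_const a by auto
  interpret blue: army_dynamics \<beta>b "\<gamma>b a" "\<gamma>tb a" "\<alpha>r a" q a Sb Ib Rb Db
      "\<lambda>t. attack (\<delta>r a) \<eta>r p (Sr t) (Ir t) (Rr t)" Sr Rr
    using params_const params_a nonneg ode_after a by unfold_locales (auto simp: Let_def attack_nonneg)
  interpret red: army_dynamics \<beta>r "\<gamma>r a" "\<gamma>tr a" "\<alpha>b a" q a Sr Ir Rr Dr
      "\<lambda>t. attack (\<delta>b a) \<eta>b p (Sb t) (Ib t) (Rb t)" Sb Rb
    using params_const params_a nonneg ode_after a by unfold_locales (auto simp: Let_def attack_nonneg)
  obtain LSb LIb LRb LDb where Lb: "(Sb \<longlongrightarrow> LSb) at_top" "(Ib \<longlongrightarrow> LIb) at_top"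
      "(Rb \<longlongrightarrow> LRb) at_top" "(Db \<longlongrightarrow> LDb) at_top"
    by (rule blue.compartments_convergent)
  obtain LSr LIr LRr LDr where Lr: "(Sr \<longlongrightarrow> LSr) at_top" "(Ir \<longlongrightarrow> LIr) at_top"
      "(Rr \<longlongrightarrow> LRr) at_top" "(Dr \<longlongrightarrow> LDr) at_top"
    by (rule red.compartments_convergent)
  have "\<forall>\<^sub>F t in at_top. 0 \<le> Sb t \<and> 0 \<le> Ib t \<and> 0 \<le> Rb t \<and> 0 \<le> Sr t \<and> 0 \<le> Ir t \<and> 0 \<le> Rr t"
    using eventually_ge_at_top[of 0] by eventually_elim (use nonneg in auto)
  then have "((\<lambda>t. attack (\<delta>b a) \<eta>b p (Sb t) (Ib t) (Rb t)) \<longlongrightarrow> attack (\<delta>b a) \<eta>b p LSb LIb LRb) at_top"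
    "((\<lambda>t. attack (\<delta>r a) \<eta>r p (Sr t) (Ir t) (Rr t)) \<longlongrightarrow> attack (\<delta>r a) \<eta>r p LSr LIr LRr) at_top"
    using Lb Lr params_const(5) by (auto intro!: tendsto_attack elim: eventually_mono)
  with Lb Lr blue.derivs_tendsto_zero red.derivs_tendsto_zero show ?thesis
    by auto
qed

end
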